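(* For every $\varepsilon>0$, c-REShare$(\varepsilon)$ is a $2(1+\varepsilon)$-asymptotic competitive algorithm when service requests have unlimited duration, i.e., over request sequences in which all requests have $\tau_r=\infty$, $\limsup_{\phi(\mathrm{OPT})\to\infty}\phi(\text{c-REShare}(\varepsilon))/\phi(\mathrm{OPT})\le 2(1+\varepsilon)$.
   Context: Network: an undirected layered graph whose vertices (nodes) are datacenters. A node is at layer $\ell\ge 0$ if its distance in links from the closest leaf is $\ell$ (leaves are at layer $0$); the network has finitely many nodes. Every node can host arbitrarily many virtual machines (VMs). Each VM $b$ runs exactly one VNF $v$ from a finite set $\mathcal V$, has maximum computing capability $\bar\mu>0$ and allocated capability $\mu_b\le\bar\mu$. Each VNF $v$ has computing complexity $\theta_v\in(0,1]$. Requests: requests $r$ arrive online; each has a set $\mathcal V_r\subseteq\mathcal V$ of VNFs, arrival time $a_r$, duration $\tau_r$, traffic load $\lambda_r\ge\lambda_{\min}$ where $\lambda_{\min}=\inf_r\lambda_r>0$ is known in advance, end-to-end delay target $D_r$, and an arrival leaf. For $v\in\mathcal V_r$, $(r,v)$ is a job. For a VM $b$ running $v$, $\Lambda(b)$ is the total load of jobs on $b$, and each job on $b$ experiences processing latency $1/(\mu_b-\theta_v\Lambda(b))$. Forwarding latency from a leaf to layer $\ell$ is $d_\ell$, with $d_{\ell+1}>d_\ell$. The latency of $r$ is the maximum of $d_\ell$ over layers hosting its jobs plus the sum of processing latencies of its jobs. Fair delay allocation: $M_{r,v}=1/(\bar\mu-\theta_v\lambda_r)$; $\ell^*(r)$ is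 the highest layer $\ell$ with $d_\ell+\sum_{v\in\mathcal V_r}M_{r,v}\le D_r$ (assumed to exist); $D_r^v=\frac{M_{r,v}}{\sum_{u\in\mathcal V_r}M_{r,u}}(D_r-d_{\ell^*(r)})$. A deployment of $r$ is feasible if each job $(r,v)$ is on a VM $b$ running $v$ with $\mu_b\le\bar\mu$ and $1/(\mu_b-\theta_v\Lambda(b))\le D_r^v$, and the latency of $r$ is at most $D_r$. Cost: a VM $b$ at a node of layer $\ell$ hosting at least one job costs $\kappa_f^\ell+\kappa_p^\ell\mu_b$, with $\kappa_f^{\ell+1}<\kappa_f^\ell$, $\kappa_p^{\ell+1}<\kappa_p^\ell$. For an algorithm $A$, $\phi(A)$ is the total cost of the VMs it uses at the end of the request sequence. OPT is a minimum-cost feasible deployment of all requests computed with full knowledge of the sequence. Latency ranges: for $\varepsilon>0$, $L_0=[\frac{1}{\bar\mu-\lambda_{\min}},\frac{1}{\bar\mu-\lambda_{\min}(1+\varepsilon)}]$, $L_j=(\frac{1}{\bar\mu-\lambda_{\min}(1+\varepsilon)^j},\frac{1}{\bar\mu-\lambda_{\min}(1+\varepsilon)^{j+1}}]$ for $j\ge1$ (indices with $\lambda_{\min}(1+\varepsilon)^{j+1}<\bar\mu$); job $(r,v)$ is associated with $L_j$ if $D_r^v\in L_j$ (every fair delay allocation is presumed to lie in some range). Algorithm c-REShare$(\varepsilon)$: on arrival of $r$, compute $\ell^*(r)$ and choose a node $i^*$ at layer $\ell^*(r)$. For each $v\in\mathcal V_r$, with $j$ such that $D_r^v\in L_j$: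 a VM $b$ in $i^*$ running $v$ and hosting jobs associated with $L_j$ is viable if $\frac{1}{\bar\mu-\theta_v(\Lambda(b)+\lambda_r)}\le D_r^v$ and $\frac{1}{\bar\mu-\theta_v(\Lambda(b)+\lambda_r)}\le D_{r'}^v$ for every job $(r',v)$ already on $b$. If viable VMs exist, $(r,v)$ is placed on the viable VM with the largest $\Lambda(b)$, whose capability is set to $\theta_v\Lambda(b)+1/\min_{(r',v)\in b}D_{r'}^v$ (including the new job); otherwise a new VM running $v$ is opened in $i^*$ with capability $\theta_v\lambda_r+1/D_r^v$ and $(r,v)$ is placed on it. Asymptotic competitiveness: an algorithm $A$ is $c$-asymptotic competitive over a class of request sequences if $\limsup \phi(A)/\phi(\mathrm{OPT})\le c$ as $\phi(\mathrm{OPT})\to\infty$ over that class. *)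

theory Defs
  imports "HOL-Analysis.Analysis"
begin

record ('n, 'v) netsys =
  nodes  :: "'n set"
  edge   :: "'n \<Rightarrow> 'n \<Rightarrow> bool"
  leaves :: "'n set"
  VNFs   :: "'v set"
  mubar  :: real                  \<comment> \<open>maximum VM computing capability\<close>
  theta  :: "'v \<Rightarrow> real"          \<comment> \<open>computing complexity of a VNF\<close>
  dlat   :: "nat \<Rightarrow> real"        \<comment> \<open>forwarding latency leaf -> layer\<close>
  kf     :: "nat \<Rightarrow> real"        \<comment> \<open>fixed VM cost per layer\<close>
  kp     :: "nat \<Rightarrow> real"        \<comment> \<open>proportional VM cost per layer\<close>
  lmin   :: real                  \<comment> \<open>lambda_min, known lower bound on loads\<close>

definition gpath :: "('n, 'v, 'z) netsys_scheme \<Rightarrow> 'n list \<Rightarrow> bool" where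
  "gpath S p \<longleftrightarrow> p \<noteq> [] \<and> set p \<subseteq> nodes S \<and>
     (\<forall>t. Suc t < length p \<longrightarrow> edge S (p ! t) (p ! Suc t))"

definition layer :: "('n, 'v, 'z) netsys_scheme \<Rightarrow> 'n \<Rightarrow> nat" where
  "layer S i = (LEAST k. \<exists>p. gpath S p \<and> length p = Suc k \<and> hd p \<in> leaves S \<and> last p = i)"

definition valid_sys :: "('n, 'v, 'z) netsys_scheme \<Rightarrow> bool" where
  "valid_sys S \<longleftrightarrow>
     finite (nodes S) \<and> leaves S \<subseteq> nodes S \<and> leaves S \<noteq> {} \<and>
     (\<forall>x y. edge S x y \<longrightarrow> x \<in> nodes S \<and> y \<in> nodes S) \<and>
     (\<forall>x y. edge S x y \<longleftrightarrow> edge S y x) \<and>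
     (\<forall>i\<in>nodes S. \<exists>p. gpath S p \<and> hd p \<in> leaves S \<and> last p = i) \<and>
     finite (VNFs S) \<and> mubar S > 0 \<and>
     (\<forall>v\<in>VNFs S. 0 < theta S v \<and> theta S v \<le> 1) \<and>
     (\<forall>l. dlat S l < dlat S (Suc l)) \<and>
     (\<forall>l. kf S (Suc l) < kf S l) \<and> (\<forall>l. kp S (Suc l) < kp S l) \<and>
     (\<forall>i\<in>nodes S. 0 < kf S (layer S i) \<and> 0 < kp S (layer S i)) \<and>
     lmin S > 0"

record ('n, 'v) req =
  rvnfs :: "'v set"
  arr   :: real
  dur   :: ereal
  load  :: real
  dtgt  :: real         \<comment> \<open>end-to-end delay target D_r\<close>
  aleaf :: 'n

definition Mrv :: "('n, 'v, 'z) netsys_scheme \<Rightarrow> ('n, 'v) req \<Rightarrow> 'v \<Rightarrow> real" where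
  "Mrv S r v = 1 / (mubar S - theta S v * load r)"

definition sumM :: "('n, 'v, 'z) netsys_scheme \<Rightarrow> ('n, 'v) req \<Rightarrow> real" where
  "sumM S r = (\<Sum>u\<in>rvnfs r. Mrv S r u)"

definition lstar :: "('n, 'v, 'z) netsys_scheme \<Rightarrow> ('n, 'v) req \<Rightarrow> nat" where
  "lstar S r = (GREATEST l. l \<in> layer S ` nodes S \<and> dlat S l + sumM S r \<le> dtgt r)"

definition Dv :: "('n, 'v, 'z) netsys_scheme \<Rightarrow> ('n, 'v) req \<Rightarrow> 'v \<Rightarrow> real" where
  "Dv S r v = Mrv S r v / sumM S r * (dtgt r - dlat S (lstar S r))"

definition inL :: "('n, 'v, 'z) netsys_scheme \<Rightarrow> real \<Rightarrow> nat \<Rightarrow> real \<Rightarrow> bool" where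
  "inL S eps j x \<longleftrightarrow> lmin S * (1 + eps) ^ (j + 1) < mubar S \<and>
     (if j = 0
      then 1 / (mubar S - lmin S) \<le> x \<and> x \<le> 1 / (mubar S - lmin S * (1 + eps))
      else 1 / (mubar S - lmin S * (1 + eps) ^ j) < x \<and>
           x \<le> 1 / (mubar S - lmin S * (1 + eps) ^ (j + 1)))"

definition valid_req :: "('n, 'v, 'z) netsys_scheme \<Rightarrow> real \<Rightarrow> ('n, 'v) req \<Rightarrow> bool" where
  "valid_req S eps r \<longleftrightarrow>
     rvnfs r \<subseteq> VNFs S \<and> lmin S \<le> load r \<and> aleaf r \<in> leaves S \<and>
     (\<forall>v\<in>rvnfs r. theta S v * load r < mubar S) \<and>
     (\<exists>l\<in>layer S ` nodes S. dlat S l + sumM S r \<le> dtgt r) \<and>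
     (\<forall>v\<in>rvnfs r. \<exists>j. inL S eps j (Dv S r v))"

text \<open>A deployment: a list of VMs (node, VNF, capability) and an assignment of
  each job (k, v) (k = index of the request in the sequence) to a VM index.\<close>
type_synonym ('n, 'v) vm = "'n \<times> 'v \<times> real"

definition jobs_on :: "('n, 'v) req list \<Rightarrow> (nat \<Rightarrow> 'v \<Rightarrow> nat) \<Rightarrow> nat \<Rightarrow> (nat \<times> 'v) set" where
  "jobs_on rs asg p = {(k, v). k < length rs \<and> v \<in> rvnfs (rs ! k) \<and> asg k v = p}"

definition Lam_off :: "('n, 'v) req list \<Rightarrow> (nat \<Rightarrow> 'v \<Rightarrow> nat) \<Rightarrow> nat \<Rightarrow> real" where
  "Lam_off rs asg p = (\<Sum>(k, v)\<in>jobs_on rs asg p. load (rs ! k))"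

definition proc_off :: "('n, 'v, 'z) netsys_scheme \<Rightarrow> ('n, 'v) req list \<Rightarrow> ('n, 'v) vm list
     \<Rightarrow> (nat \<Rightarrow> 'v \<Rightarrow> nat) \<Rightarrow> nat \<Rightarrow> real" where
  "proc_off S rs vms asg p =
     1 / (snd (snd (vms ! p)) - theta S (fst (snd (vms ! p))) * Lam_off rs asg p)"

definition feasible_dep :: "('n, 'v, 'z) netsys_scheme \<Rightarrow> ('n, 'v) req list \<Rightarrow> ('n, 'v) vm list
     \<Rightarrow> (nat \<Rightarrow> 'v \<Rightarrow> nat) \<Rightarrow> bool" where
  "feasible_dep S rs vms asg \<longleftrightarrow>
     (\<forall>p<length vms. fst (vms ! p) \<in> nodes S \<and> fst (snd (vms ! p)) \<in> VNFs S \<and>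
                      snd (snd (vms ! p)) \<le> mubar S) \<and>
     (\<forall>k<length rs. \<forall>v\<in>rvnfs (rs ! k).
        asg k v < length vms \<and> fst (snd (vms ! asg k v)) = v \<and>
        snd (snd (vms ! asg k v)) - theta S v * Lam_off rs asg (asg k v) > 0 \<and>
        proc_off S rs vms asg (asg k v) \<le> Dv S (rs ! k) v) \<and>
     (\<forall>k<length rs. \<forall>u\<in>rvnfs (rs ! k).
        dlat S (layer S (fst (vms ! asg k u))) +
          (\<Sum>w\<in>rvnfs (rs ! k). proc_off S rs vms asg (asg k w)) \<le> dtgt (rs ! k))"

definition dep_cost :: "('n, 'v, 'z) netsys_scheme \<Rightarrow> ('n, 'v) req list \<Rightarrow> ('n, 'v) vm list
     \<Rightarrow> (nat \<Rightarrow> 'v \<Rightarrow> nat) \<Rightarrow> real" where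
  "dep_cost S rs vms asg =
     (\<Sum>p\<in>{p. p < length vms \<and> jobs_on rs asg p \<noteq> {}}.
        kf S (layer S (fst (vms ! p))) + kp S (layer S (fst (vms ! p))) * snd (snd (vms ! p)))"

definition opt_cost :: "('n, 'v, 'z) netsys_scheme \<Rightarrow> ('n, 'v) req list \<Rightarrow> real" where
  "opt_cost S rs = Inf {dep_cost S rs vms asg | vms asg. feasible_dep S rs vms asg}"

text \<open>An algorithm VM: node, VNF, latency-range index j, jobs (request indices).\<close>
datatype ('n, 'v) avm = AVM (vnode: 'n) (vvnf: 'v) (vrng: nat) (vjobs: "nat list")

definition Lam :: "('n, 'v) req list \<Rightarrow> ('n, 'v) avm \<Rightarrow> real" where
  "Lam rs b = sum_list (map (\<lambda>k. load (rs ! k)) (vjobs b))"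

definition viable :: "('n, 'v, 'z) netsys_scheme \<Rightarrow> ('n, 'v) req list \<Rightarrow> nat \<Rightarrow> 'v \<Rightarrow> 'n
     \<Rightarrow> nat \<Rightarrow> ('n, 'v) avm \<Rightarrow> bool" where
  "viable S rs k v i j b \<longleftrightarrow>
     vnode b = i \<and> vvnf b = v \<and> vrng b = j \<and>
     (let x = mubar S - theta S v * (Lam rs b + load (rs ! k)) in
        x > 0 \<and> 1 / x \<le> Dv S (rs ! k) v \<and>
        (\<forall>k'\<in>set (vjobs b). 1 / x \<le> Dv S (rs ! k') v))"

text \<open>Placement of job (k, v) in node i (ties among viable VMs broken arbitrarily).\<close>
inductive place :: "('n, 'v, 'z) netsys_scheme \<Rightarrow> real \<Rightarrow> ('n, 'v) req list \<Rightarrow> nat \<Rightarrow> 'n \<Rightarrow> 'v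
     \<Rightarrow> ('n, 'v) avm list \<Rightarrow> ('n, 'v) avm list \<Rightarrow> bool"
  for S eps rs k i v where
  place_old: "\<lbrakk> inL S eps j (Dv S (rs ! k) v); p < length st; viable S rs k v i j (st ! p);
      \<forall>q<length st. viable S rs k v i j (st ! q) \<longrightarrow> Lam rs (st ! q) \<le> Lam rs (st ! p) \<rbrakk>
    \<Longrightarrow> place S eps rs k i v st (st[p := AVM i v j (vjobs (st ! p) @ [k])])"
| place_new: "\<lbrakk> inL S eps j (Dv S (rs ! k) v);
      \<not> (\<exists>q<length st. viable S rs k v i j (st ! q)) \<rbrakk>
    \<Longrightarrow> place S eps rs k i v st (st @ [AVM i v j [k]])"

inductive place_list :: "('n, 'v, 'z) netsys_scheme \<Rightarrow> real \<Rightarrow> ('n, 'v) req list \<Rightarrow> nat \<Rightarrow> 'n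
     \<Rightarrow> 'v list \<Rightarrow> ('n, 'v) avm list \<Rightarrow> ('n, 'v) avm list \<Rightarrow> bool"
  for S eps rs k i where
  "place_list S eps rs k i [] st st"
| "\<lbrakk> place S eps rs k i v st st1; place_list S eps rs k i vs st1 st2 \<rbrakk>
    \<Longrightarrow> place_list S eps rs k i (v # vs) st st2"

text \<open>State after processing the first n requests (any node choice at layer l*(r),
  any processing order of the VNFs of a request, any tie breaking).\<close>
inductive alg_run :: "('n, 'v, 'z) netsys_scheme \<Rightarrow> real \<Rightarrow> ('n, 'v) req list \<Rightarrow> nat
     \<Rightarrow> ('n, 'v) avm list \<Rightarrow> bool"
  for S eps rs where
  "alg_run S eps rs 0 []"
| "\<lbrakk> alg_run S eps rs n st; n < length rs; i \<in> nodes S; layer S i = lstar S (rs ! n);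
     distinct vs; set vs = rvnfs (rs ! n); place_list S eps rs n i vs st st' \<rbrakk>
    \<Longrightarrow> alg_run S eps rs (Suc n) st'"

definition acap :: "('n, 'v, 'z) netsys_scheme \<Rightarrow> ('n, 'v) req list \<Rightarrow> ('n, 'v) avm \<Rightarrow> real" where
  "acap S rs b = theta S (vvnf b) * Lam rs b +
     1 / Min ((\<lambda>k. Dv S (rs ! k) (vvnf b)) ` set (vjobs b))"

definition alg_cost :: "('n, 'v, 'z) netsys_scheme \<Rightarrow> ('n, 'v) req list \<Rightarrow> ('n, 'v) avm list \<Rightarrow> real" where
  "alg_cost S rs st = sum_list (map (\<lambda>b.
     if vjobs b = [] then 0 else kf S (layer S (vnode b)) + kp S (layer S (vnode b)) * acap S rs b) st)"

text \<open>limsup of phi(A)/phi(OPT) as phi(OPT) -> infinity over the class is at most c.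
  The algorithm may be nondeterministic: A sigma a means some run of A on sigma has cost a.\<close>
definition asymp_competitive :: "real \<Rightarrow> ('s \<Rightarrow> bool) \<Rightarrow> ('s \<Rightarrow> real \<Rightarrow> bool) \<Rightarrow> ('s \<Rightarrow> real) \<Rightarrow> bool" where
  "asymp_competitive c cls A OPT \<longleftrightarrow>
     (\<forall>\<delta>>0. \<exists>X. \<forall>\<sigma> a. cls \<sigma> \<longrightarrow> A \<sigma> a \<longrightarrow> X \<le> OPT \<sigma> \<longrightarrow> a \<le> (c + \<delta>) * OPT \<sigma>)"

definition unlimited_seq :: "('n, 'v, 'z) netsys_scheme \<Rightarrow> real \<Rightarrow> ('n, 'v) req list \<Rightarrow> bool" where
  "unlimited_seq S eps rs \<longleftrightarrow>
     sorted (map arr rs) \<and> (\<forall>r\<in>set rs. valid_req S eps r \<and> dur r = \<infinity>)"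

end

theory Submission
  imports Defs
begin

text \<open>Every job receives two charges, determined by its weighted load \<open>theta\<^sub>v \<lambda>\<^sub>r\<close>,
  its latency range \<open>L\<^sub>j\<close> and the layer \<open>l*(r)\<close>; write \<open>c\<^sub>j = lmin (1 + eps)^j\<close>.
  A VM of a feasible deployment serving a job of range \<open>L\<^sub>j\<close> has residual capability at least
  \<open>mubar - c\<^sub>j (1 + eps)\<close>, hence weighted load at most \<open>c\<^sub>j (1 + eps)\<close>, and it sits no higher
  than \<open>l*(r)\<close>; splitting its cost in proportion to load shows that it costs at least the
  OPT-charges of its jobs, so OPT is at least their sum.
  In c-REShare all jobs of a VM share node, VNF and range. A VM with \<open>2 theta \<Lambda> > c\<^sub>j\<close> is paid
  for by the ALG-charges of its jobs, each at most \<open>2 (1 + eps)\<close> times the OPT-charge. Of the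
  VMs of one class at most one is light, because a new VM is opened only when the existing ones
  are not viable; so light VMs cost at most a constant independent of the request sequence,
  which vanishes relative to OPT.\<close>

lemma sum_list_list_update:
  fixes xs :: "'a::ab_group_add list"
  assumes "p < length xs"
  shows "sum_list (xs[p := x]) = sum_list xs - xs ! p + x"
proof -
  have "sum_list xs = sum_list (take p xs @ xs ! p # drop (Suc p) xs)"
    using id_take_nth_drop[OF assms] by simp
  then show ?thesis using upd_conv_take_nth_drop[OF assms] by simp
qed

lemma finite_geometric_below:
  fixes a e M :: real
  assumes "0 < a" "0 < e"
  shows "finite {j. a * (1 + e) ^ j < M}"
proof (rule finite_subset)
  show "{j. a * (1 + e) ^ j < M} \<subseteq> {..nat \<lceil>M / (a * e)\<rceil>}"
  proof
    fix j assume "j \<in> {j. a * (1 + e) ^ j < M}"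
    moreover have "a * (1 + real j * e) \<le> a * (1 + e) ^ j"
      using Bernoulli_inequality[of e j] assms by (intro mult_left_mono) auto
    ultimately have "real j * (a * e) < M" using assms by (simp add: algebra_simps)
    then have "real j < M / (a * e)" using assms by (simp add: field_simps)
    then have "real j < real (nat \<lceil>M / (a * e)\<rceil>)" using of_nat_ceiling by (rule less_le_trans)
    then show "j \<in> {..nat \<lceil>M / (a * e)\<rceil>}" by simp
  qed
qed simp

section \<open>Latency ranges\<close>

definition range_load :: "('n, 'v, 'z) netsys_scheme \<Rightarrow> real \<Rightarrow> nat \<Rightarrow> real" where
  "range_load S eps j = lmin S * (1 + eps) ^ j"

lemma inL_bounds:
  assumes "valid_sys S" "eps > 0" "inL S eps j x"
  shows "0 < range_load S eps j" "0 < x"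
    "0 < mubar S - range_load S eps j * (1 + eps)"
    "mubar S - range_load S eps j * (1 + eps) \<le> 1 / x"
    "1 / x \<le> mubar S - range_load S eps j"
proof -
  let ?c = "range_load S eps j"
  show c_pos: "0 < ?c" using assms(1,2) by (simp add: range_load_def valid_sys_def)
  show top: "0 < mubar S - ?c * (1 + eps)"
    using assms(3) by (simp add: inL_def range_load_def mult_ac)
  have "?c < ?c * (1 + eps)" using c_pos assms(2) by simp
  then have below: "0 < mubar S - ?c" using top by linarith
  have x_lower: "1 / (mubar S - ?c) \<le> x" and x_upper: "x \<le> 1 / (mubar S - ?c * (1 + eps))"
    using assms(3) by (auto simp: inL_def range_load_def mult_ac split: if_splits)
  show x_pos: "0 < x" using x_lower below by (smt (verit) divide_pos_pos)
  show "mubar S - ?c * (1 + eps) \<le> 1 / x"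
    using x_upper x_pos top by (simp add: le_divide_eq mult.commute)
  show "1 / x \<le> mubar S - ?c"
    using x_lower x_pos below by (simp add: divide_le_eq mult.commute)
qed

lemma inL_unique:
  assumes "valid_sys S" "eps > 0" "inL S eps j x" "inL S eps j' x"
  shows "j = j'"
proof -
  have False if a: "inL S eps a x" and b: "inL S eps b x" and "a < b" for a b
  proof -
    have "0 < mubar S - range_load S eps b * (1 + eps)"
      using inL_bounds(3)[OF assms(1,2) b] .
    moreover have "range_load S eps (Suc a) \<le> range_load S eps b"
      using \<open>a < b\<close> assms(1,2) unfolding range_load_def
      by (intro mult_left_mono power_increasing) (auto simp: valid_sys_def)
    moreover have "x \<le> 1 / (mubar S - range_load S eps (Suc a))"
      using a by (simp add: inL_def range_load_def split: if_splits)
    moreover have "1 / (mubar S - range_load S eps b) < x"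
      using b \<open>a < b\<close> by (simp add: inL_def range_load_def)
    ultimately show False
      using assms(2) inL_bounds(1)[OF assms(1,2) b]
      by (smt (verit) frac_le mult_less_cancel_left2)
  qed
  then show ?thesis using assms(3,4) by (metis linorder_neqE_nat)
qed

definition range_index :: "('n, 'v, 'z) netsys_scheme \<Rightarrow> real \<Rightarrow> real \<Rightarrow> nat" where
  "range_index S eps x = (THE j. inL S eps j x)"

lemma range_index_eq:
  "valid_sys S \<Longrightarrow> eps > 0 \<Longrightarrow> inL S eps j x \<Longrightarrow> range_index S eps x = j"
  unfolding range_index_def using inL_unique by blast

lemma inL_range_index:
  assumes "valid_sys S" "eps > 0" "valid_req S eps r" "v \<in> rvnfs r"
  shows "inL S eps (range_index S eps (Dv S r v)) (Dv S r v)"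
proof -
  obtain j where "inL S eps j (Dv S r v)" using assms(3,4) unfolding valid_req_def by blast
  then show ?thesis using range_index_eq[OF assms(1,2)] by simp
qed

lemma lstar_in_layers:
  assumes "valid_sys S" "valid_req S eps r"
  shows "lstar S r \<in> layer S ` nodes S"
proof -
  let ?P = "\<lambda>l. l \<in> layer S ` nodes S \<and> dlat S l + sumM S r \<le> dtgt r"
  obtain l where "?P l" using assms(2) unfolding valid_req_def by blast
  moreover have "finite (layer S ` nodes S)" using assms(1) by (simp add: valid_sys_def)
  then have "\<And>y. ?P y \<Longrightarrow> y \<le> Max (layer S ` nodes S)" by simp
  ultimately have "?P (Greatest ?P)" by (rule GreatestI_nat)
  then show ?thesis unfolding lstar_def by blast
qed

lemma le_lstar:
  assumes "valid_sys S" "l \<in> layer S ` nodes S" "dlat S l + sumM S r \<le> dtgt r"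
  shows "l \<le> lstar S r"
proof -
  have "finite (layer S ` nodes S)" using assms(1) by (simp add: valid_sys_def)
  then show ?thesis
    unfolding lstar_def using assms(2,3) by (intro Greatest_le_nat[of _ l "Max (layer S ` nodes S)"]) auto
qed

lemma kf_antimono: "valid_sys S \<Longrightarrow> l \<le> l' \<Longrightarrow> kf S l' \<le> kf S l"
  by (rule lift_Suc_antimono_le[of "kf S"]) (auto simp: valid_sys_def less_imp_le)

lemma kp_antimono: "valid_sys S \<Longrightarrow> l \<le> l' \<Longrightarrow> kp S l' \<le> kp S l"
  by (rule lift_Suc_antimono_le[of "kp S"]) (auto simp: valid_sys_def less_imp_le)

lemma kf_kp_pos: "valid_sys S \<Longrightarrow> l \<in> layer S ` nodes S \<Longrightarrow> 0 < kf S l \<and> 0 < kp S l"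
  by (auto simp: valid_sys_def)

lemma valid_req_nth: "unlimited_seq S eps rs \<Longrightarrow> k < length rs \<Longrightarrow> valid_req S eps (rs ! k)"
  unfolding unlimited_seq_def by auto

lemma load_pos: "valid_sys S \<Longrightarrow> valid_req S eps r \<Longrightarrow> 0 < load r"
  by (auto simp: valid_sys_def valid_req_def intro: less_le_trans)

lemma theta_pos: "valid_sys S \<Longrightarrow> valid_req S eps r \<Longrightarrow> v \<in> rvnfs r \<Longrightarrow> 0 < theta S v"
  by (auto simp: valid_sys_def valid_req_def)

lemma finite_rvnfs: "valid_sys S \<Longrightarrow> valid_req S eps r \<Longrightarrow> finite (rvnfs r)"
  by (auto simp: valid_sys_def valid_req_def intro: finite_subset)

definition jobs :: "('n, 'v) req list \<Rightarrow> (nat \<times> 'v) set" where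
  "jobs rs = (SIGMA k:{..<length rs}. rvnfs (rs ! k))"

lemma finite_jobs:
  "valid_sys S \<Longrightarrow> unlimited_seq S eps rs \<Longrightarrow> finite (jobs rs)"
  unfolding jobs_def by (auto intro: finite_rvnfs valid_req_nth)

lemma jobs_on_eq: "jobs_on rs asg p = {y \<in> jobs rs. asg (fst y) (snd y) = p}"
  by (auto simp: jobs_on_def jobs_def)

section \<open>A lower bound on OPT\<close>

lemma feasible_dep_vmD:
  assumes "feasible_dep S rs vms asg" "p < length vms"
  shows "fst (vms ! p) \<in> nodes S" "snd (snd (vms ! p)) \<le> mubar S"
  using assms by (simp_all add: feasible_dep_def)

lemma feasible_dep_jobD:
  assumes "feasible_dep S rs vms asg" "(k, v) \<in> jobs rs"
  shows "asg k v < length vms" "fst (snd (vms ! asg k v)) = v"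
    "0 < snd (snd (vms ! asg k v)) - theta S v * Lam_off rs asg (asg k v)"
    "proc_off S rs vms asg (asg k v) \<le> Dv S (rs ! k) v"
    "dlat S (layer S (fst (vms ! asg k v))) +
       (\<Sum>w\<in>rvnfs (rs ! k). proc_off S rs vms asg (asg k w)) \<le> dtgt (rs ! k)"
  using assms unfolding feasible_dep_def jobs_def by auto

lemma Lam_off_ge_load:
  assumes "valid_sys S" "unlimited_seq S eps rs" "(k, v) \<in> jobs_on rs asg p"
  shows "load (rs ! k) \<le> Lam_off rs asg p"
proof -
  have "finite (jobs_on rs asg p)" using finite_jobs[OF assms(1,2)] by (simp add: jobs_on_eq)
  moreover have "0 \<le> load (rs ! fst y)" if "y \<in> jobs_on rs asg p" for y
    using that load_pos[OF assms(1) valid_req_nth[OF assms(2)]]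
    by (auto simp: jobs_on_def less_imp_le)
  ultimately show ?thesis
    unfolding Lam_off_def case_prod_unfold
    using member_le_sum[OF assms(3), of "\<lambda>y. load (rs ! fst y)"] by simp
qed

lemma Mrv_le_proc_off:
  assumes vs: "valid_sys S" and us: "unlimited_seq S eps rs"
    and fd: "feasible_dep S rs vms asg" and kw: "(k, w) \<in> jobs rs"
  shows "Mrv S (rs ! k) w \<le> proc_off S rs vms asg (asg k w)"
proof -
  let ?q = "asg k w"
  have k: "k < length rs" "w \<in> rvnfs (rs ! k)" using kw by (auto simp: jobs_def)
  have "load (rs ! k) \<le> Lam_off rs asg ?q"
    using Lam_off_ge_load[OF vs us] kw by (simp add: jobs_on_eq)
  then have "theta S w * load (rs ! k) \<le> theta S w * Lam_off rs asg ?q"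
    using theta_pos[OF vs valid_req_nth[OF us k(1)] k(2)] by simp
  moreover have "snd (snd (vms ! ?q)) \<le> mubar S"
    using feasible_dep_vmD(2)[OF fd feasible_dep_jobD(1)[OF fd kw]] .
  moreover note feasible_dep_jobD(2,3)[OF fd kw]
  ultimately show ?thesis
    unfolding Mrv_def proc_off_def by (intro divide_left_mono) auto
qed

lemma feasible_layer_le_lstar:
  assumes vs: "valid_sys S" and us: "unlimited_seq S eps rs"
    and fd: "feasible_dep S rs vms asg" and kv: "(k, v) \<in> jobs rs"
  shows "layer S (fst (vms ! asg k v)) \<le> lstar S (rs ! k)"
proof (rule le_lstar[OF vs])
  show "layer S (fst (vms ! asg k v)) \<in> layer S ` nodes S"
    using feasible_dep_vmD(1)[OF fd feasible_dep_jobD(1)[OF fd kv]] by simp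
  have "sumM S (rs ! k) \<le> (\<Sum>w\<in>rvnfs (rs ! k). proc_off S rs vms asg (asg k w))"
    unfolding sumM_def using kv
    by (intro sum_mono Mrv_le_proc_off[OF vs us fd]) (auto simp: jobs_def)
  then show "dlat S (layer S (fst (vms ! asg k v))) + sumM S (rs ! k) \<le> dtgt (rs ! k)"
    using feasible_dep_jobD(5)[OF fd kv] by linarith
qed

text \<open>The share, proportional to weighted load, of a VM at layer \<open>l*(r)\<close> with capability
  \<open>mubar\<close> and weighted load \<open>c\<^sub>j (1 + eps)\<close>, where \<open>c\<^sub>j = range_load S eps j\<close>.\<close>
definition opt_charge :: "('n, 'v, 'z) netsys_scheme \<Rightarrow> real \<Rightarrow> ('n, 'v) req \<Rightarrow> 'v \<Rightarrow> real" where
  "opt_charge S eps r v =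
     theta S v * load r / (range_load S eps (range_index S eps (Dv S r v)) * (1 + eps)) *
       (kf S (lstar S r) + kp S (lstar S r) *
          (mubar S - range_load S eps (range_index S eps (Dv S r v)) * (1 + eps)))
     + kp S (lstar S r) * (theta S v * load r)"

lemma share_bound:
  fixes w W d m x kf\<^sub>0 kp\<^sub>0 kf kp :: real
  assumes "0 < w" "0 < W" "W \<le> d" "0 \<le> m - d" "m - d \<le> x"
    "0 \<le> kf\<^sub>0" "kf\<^sub>0 \<le> kf" "0 \<le> kp\<^sub>0" "kp\<^sub>0 \<le> kp"
  shows "w / d * (kf\<^sub>0 + kp\<^sub>0 * (m - d)) + kp\<^sub>0 * w \<le> w / W * (kf + kp * x) + kp * w"
proof -
  have "kp\<^sub>0 * (m - d) \<le> kp * x" using assms by (intro mult_mono) auto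
  then have "0 \<le> kf\<^sub>0 + kp\<^sub>0 * (m - d)" "kf\<^sub>0 + kp\<^sub>0 * (m - d) \<le> kf + kp * x"
    using assms by (auto intro: mult_nonneg_nonneg)
  moreover have "0 \<le> w / d" "w / d \<le> w / W" using assms by (auto intro: frac_le)
  ultimately have "w / d * (kf\<^sub>0 + kp\<^sub>0 * (m - d)) \<le> w / W * (kf + kp * x)"
    by (intro mult_mono) auto
  moreover have "kp\<^sub>0 * w \<le> kp * w" using assms by (intro mult_right_mono) auto
  ultimately show ?thesis by linarith
qed

lemma opt_charge_le_load_share:
  assumes vs: "valid_sys S" and ep: "eps > 0" and us: "unlimited_seq S eps rs"
    and fd: "feasible_dep S rs vms asg" and kv: "(k, v) \<in> jobs rs"
  defines "q \<equiv> asg k v"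
  defines "l \<equiv> layer S (fst (vms ! q))"
    and "x \<equiv> snd (snd (vms ! q)) - theta S v * Lam_off rs asg q"
  shows "opt_charge S eps (rs ! k) v
    \<le> load (rs ! k) / Lam_off rs asg q * (kf S l + kp S l * x) + kp S l * (theta S v * load (rs ! k))"
proof -
  have r: "valid_req S eps (rs ! k)" "v \<in> rvnfs (rs ! k)"
    using kv valid_req_nth[OF us] by (auto simp: jobs_def)
  define c where "c = range_load S eps (range_index S eps (Dv S (rs ! k) v))"
  define L where "L = lstar S (rs ! k)"
  note range = inL_bounds[OF vs ep inL_range_index[OF vs ep r], folded c_def]
  have th_pos: "0 < theta S v" using theta_pos[OF vs r] .
  have "0 < load (rs ! k)" using load_pos[OF vs r(1)] .
  moreover have "load (rs ! k) \<le> Lam_off rs asg q"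
    using Lam_off_ge_load[OF vs us] kv by (simp add: jobs_on_eq q_def)
  ultimately have weights: "0 < theta S v * load (rs ! k)" "0 < theta S v * Lam_off rs asg q"
    using th_pos by simp_all
  have x_pos: "0 < x" and "1 / x \<le> Dv S (rs ! k) v"
    using feasible_dep_jobD(2-4)[OF fd kv] by (simp_all add: x_def q_def proc_off_def)
  then have "1 / Dv S (rs ! k) v \<le> x" using range(2) by (simp add: divide_le_eq mult.commute)
  then have x_ge: "mubar S - c * (1 + eps) \<le> x" using range(4) by linarith
  moreover have "snd (snd (vms ! q)) \<le> mubar S"
    using feasible_dep_vmD(2)[OF fd feasible_dep_jobD(1)[OF fd kv]] by (simp add: q_def)
  ultimately have "theta S v * Lam_off rs asg q \<le> c * (1 + eps)" unfolding x_def by linarith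
  moreover have "l \<le> L" using feasible_layer_le_lstar[OF vs us fd kv] by (simp add: l_def L_def q_def)
  then have "kf S L \<le> kf S l" "kp S L \<le> kp S l"
    using kf_antimono[OF vs] kp_antimono[OF vs] by auto
  moreover have "0 < kf S L" "0 < kp S L"
    unfolding L_def using kf_kp_pos[OF vs lstar_in_layers[OF vs r(1)]] by auto
  ultimately have "opt_charge S eps (rs ! k) v \<le> theta S v * load (rs ! k) / (theta S v * Lam_off rs asg q)
      * (kf S l + kp S l * x) + kp S l * (theta S v * load (rs ! k))"
    unfolding opt_charge_def c_def[symmetric] L_def[symmetric]
    using weights range(3) x_ge by (intro share_bound) auto
  then show ?thesis using th_pos by simp
qed

lemma feasible_vm_cost_ge_opt_charges:
  assumes vs: "valid_sys S" and ep: "eps > 0" and us: "unlimited_seq S eps rs"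
    and fd: "feasible_dep S rs vms asg"
    and p: "p < length vms" and ne: "jobs_on rs asg p \<noteq> {}"
  shows "(\<Sum>y\<in>jobs_on rs asg p. opt_charge S eps (rs ! fst y) (snd y))
     \<le> kf S (layer S (fst (vms ! p))) + kp S (layer S (fst (vms ! p))) * snd (snd (vms ! p))"
proof -
  obtain i v\<^sub>0 \<mu> where vp: "vms ! p = (i, v\<^sub>0, \<mu>)" by (cases "vms ! p") auto
  define l where "l = layer S i"
  define \<Lambda> where "\<Lambda> = Lam_off rs asg p"
  define B where "B = kf S l + kp S l * (\<mu> - theta S v\<^sub>0 * \<Lambda>)"
  have on_p: "(k, v) \<in> jobs rs" "asg k v = p" "v = v\<^sub>0" if "(k, v) \<in> jobs_on rs asg p" for k v
    using that feasible_dep_jobD(2)[OF fd, of k v] vp by (auto simp: jobs_on_eq)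
  have charge: "opt_charge S eps (rs ! k) v \<le> load (rs ! k) / \<Lambda> * B + kp S l * theta S v\<^sub>0 * load (rs ! k)"
    if "(k, v) \<in> jobs_on rs asg p" for k v
    using opt_charge_le_load_share[OF vs ep us fd on_p(1)[OF that]] on_p[OF that] vp
    by (simp add: l_def \<Lambda>_def B_def mult.assoc)
  have \<Lambda>_eq: "\<Lambda> = (\<Sum>y\<in>jobs_on rs asg p. load (rs ! fst y))"
    unfolding \<Lambda>_def Lam_off_def by (simp add: case_prod_unfold)
  have "finite (jobs_on rs asg p)" using finite_jobs[OF vs us] by (simp add: jobs_on_eq)
  then have \<Lambda>_pos: "0 < \<Lambda>"
    unfolding \<Lambda>_eq using ne on_p(1)
    by (intro sum_pos) (auto simp: jobs_def intro: load_pos[OF vs valid_req_nth[OF us]])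
  have "(\<Sum>y\<in>jobs_on rs asg p. opt_charge S eps (rs ! fst y) (snd y))
      \<le> (\<Sum>y\<in>jobs_on rs asg p. load (rs ! fst y) / \<Lambda> * B + kp S l * theta S v\<^sub>0 * load (rs ! fst y))"
    using charge by (intro sum_mono) auto
  also have "\<dots> = B / \<Lambda> * (\<Sum>y\<in>jobs_on rs asg p. load (rs ! fst y))
      + kp S l * theta S v\<^sub>0 * (\<Sum>y\<in>jobs_on rs asg p. load (rs ! fst y))"
    by (simp add: sum.distrib sum_distrib_left mult_ac)
  also have "\<dots> = B + kp S l * theta S v\<^sub>0 * \<Lambda>" using \<Lambda>_pos by (simp flip: \<Lambda>_eq)
  also have "\<dots> = kf S l + kp S l * \<mu>" unfolding B_def by (simp add: algebra_simps)
  finally show ?thesis using vp by (simp add: l_def)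
qed

lemma dep_cost_ge_opt_charges:
  assumes vs: "valid_sys S" and ep: "eps > 0" and us: "unlimited_seq S eps rs"
    and fd: "feasible_dep S rs vms asg"
  shows "(\<Sum>y\<in>jobs rs. opt_charge S eps (rs ! fst y) (snd y)) \<le> dep_cost S rs vms asg"
proof -
  let ?P = "{p. p < length vms \<and> jobs_on rs asg p \<noteq> {}}"
  let ?g = "\<lambda>y. asg (fst y) (snd y)"
  let ?h = "\<lambda>y. opt_charge S eps (rs ! fst y) (snd y)"
  have "?g ` jobs rs \<subseteq> ?P"
    using feasible_dep_jobD(1)[OF fd] by (fastforce simp: jobs_on_eq)
  then have "(\<Sum>y\<in>jobs rs. ?h y) = (\<Sum>p\<in>?P. \<Sum>y\<in>jobs_on rs asg p. ?h y)"
    using sum.group[OF finite_jobs[OF vs us], of ?P ?g ?h] by (simp add: jobs_on_eq)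
  also have "\<dots> \<le> dep_cost S rs vms asg"
    unfolding dep_cost_def
    by (intro sum_mono feasible_vm_cost_ge_opt_charges[OF vs ep us fd]) auto
  finally show ?thesis .
qed

lemma opt_cost_ge_opt_charges:
  assumes vs: "valid_sys S" and ep: "eps > 0" and us: "unlimited_seq S eps rs"
    and ne: "{dep_cost S rs vms asg | vms asg. feasible_dep S rs vms asg} \<noteq> {}"
  shows "(\<Sum>y\<in>jobs rs. opt_charge S eps (rs ! fst y) (snd y)) \<le> opt_cost S rs"
  unfolding opt_cost_def
  using dep_cost_ge_opt_charges[OF vs ep us] by (intro cInf_greatest[OF ne]) blast

section \<open>Invariants of c-REShare\<close>

definition vm_class :: "('n, 'v) avm \<Rightarrow> 'n \<times> 'v \<times> nat" where
  "vm_class b = (vnode b, vvnf b, vrng b)"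

definition wf_vm :: "('n, 'v, 'z) netsys_scheme \<Rightarrow> real \<Rightarrow> ('n, 'v) req list \<Rightarrow> ('n, 'v) avm \<Rightarrow> bool" where
  "wf_vm S eps rs b \<longleftrightarrow> vjobs b \<noteq> [] \<and> vnode b \<in> nodes S \<and>
     (\<forall>k\<in>set (vjobs b). k < length rs \<and> vvnf b \<in> rvnfs (rs ! k) \<and>
        inL S eps (vrng b) (Dv S (rs ! k) (vvnf b)) \<and> layer S (vnode b) = lstar S (rs ! k))"

text \<open>The later of two VMs of one class was opened because the earlier one was not viable
  for its first job; since loads only grow, the two can never be light at the same time.\<close>
definition separated :: "('n, 'v, 'z) netsys_scheme \<Rightarrow> real \<Rightarrow> ('n, 'v) req list \<Rightarrow> ('n, 'v) avm list \<Rightarrow> bool" where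
  "separated S eps rs st \<longleftrightarrow>
     (\<forall>p q. p < q \<and> q < length st \<and> vm_class (st ! p) = vm_class (st ! q) \<longrightarrow>
        range_load S eps (vrng (st ! p)) < theta S (vvnf (st ! p)) * (Lam rs (st ! p) + Lam rs (st ! q)))"

definition alg_inv :: "('n, 'v, 'z) netsys_scheme \<Rightarrow> real \<Rightarrow> ('n, 'v) req list \<Rightarrow> ('n, 'v) avm list \<Rightarrow> bool" where
  "alg_inv S eps rs st \<longleftrightarrow> (\<forall>b\<in>set st. wf_vm S eps rs b) \<and> separated S eps rs st"

definition vm_job_sum :: "(nat \<Rightarrow> 'v \<Rightarrow> real) \<Rightarrow> ('n, 'v) avm list \<Rightarrow> real" where
  "vm_job_sum f st = (\<Sum>b\<leftarrow>st. \<Sum>k\<leftarrow>vjobs b. f k (vvnf b))"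

lemma place_vm_job_sum:
  assumes "place S eps rs k i v st st'"
  shows "vm_job_sum f st' = vm_job_sum f st + f k v"
  using assms
proof cases
  case (place_old j p)
  then have "vvnf (st ! p) = v" by (simp add: viable_def)
  with place_old show ?thesis
    by (simp add: vm_job_sum_def map_update sum_list_list_update)
next
  case (place_new j)
  then show ?thesis by (simp add: vm_job_sum_def)
qed

lemma place_list_vm_job_sum:
  "place_list S eps rs k i vs st st' \<Longrightarrow> vm_job_sum f st' = vm_job_sum f st + (\<Sum>v\<leftarrow>vs. f k v)"
  by (induction rule: place_list.induct) (simp_all add: place_vm_job_sum)

lemma alg_run_vm_job_sum:
  "alg_run S eps rs n st \<Longrightarrow> vm_job_sum f st = (\<Sum>k<n. \<Sum>v\<in>rvnfs (rs ! k). f k v)"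
proof (induction rule: alg_run.induct)
  case 1
  then show ?case by (simp add: vm_job_sum_def)
next
  case (2 n st i vs st')
  then show ?case by (simp add: place_list_vm_job_sum sum_list_distinct_conv_sum_set)
qed

lemma wf_vm_theta_pos:
  "valid_sys S \<Longrightarrow> unlimited_seq S eps rs \<Longrightarrow> wf_vm S eps rs b \<Longrightarrow> 0 < theta S (vvnf b)"
  unfolding wf_vm_def by (cases "vjobs b") (auto intro: theta_pos valid_req_nth)

lemma viable_if_weighted_load_le:
  assumes vs: "valid_sys S" and ep: "eps > 0"
    and b: "vnode b = i" "vvnf b = v" "vrng b = j"
    and k: "inL S eps j (Dv S (rs ! k) v)"
    and jobs_b: "\<forall>k'\<in>set (vjobs b). inL S eps j (Dv S (rs ! k') v)"
    and light: "theta S v * (Lam rs b + load (rs ! k)) \<le> range_load S eps j"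
  shows "viable S rs k v i j b"
proof -
  define x where "x = mubar S - theta S v * (Lam rs b + load (rs ! k))"
  have "0 < mubar S - range_load S eps j"
    using inL_bounds(1,3)[OF vs ep k] ep by (smt (verit) mult_le_cancel_left1)
  then have x_pos: "0 < x" using light unfolding x_def by linarith
  have "1 / x \<le> D" if "inL S eps j D" for D
  proof -
    have "1 / D \<le> x" using inL_bounds(5)[OF vs ep that] light unfolding x_def by linarith
    then show ?thesis using x_pos inL_bounds(2)[OF vs ep that] by (simp add: divide_le_eq mult.commute)
  qed
  then show ?thesis using b k jobs_b x_pos by (auto simp: viable_def x_def Let_def)
qed

lemma separated_mono:
  assumes sep: "separated S eps rs st" and len: "length st' = length st"
    and grow: "\<forall>p<length st. vm_class (st' ! p) = vm_class (st ! p) \<and> Lam rs (st ! p) \<le> Lam rs (st' ! p)"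
    and theta: "\<forall>b\<in>set st. 0 \<le> theta S (vvnf b)"
  shows "separated S eps rs st'"
  unfolding separated_def
proof (intro allI impI)
  fix p q assume pq: "p < q \<and> q < length st' \<and> vm_class (st' ! p) = vm_class (st' ! q)"
  then have pq_st: "p < length st" "q < length st" using len by auto
  then have cls: "vm_class (st' ! p) = vm_class (st ! p)" "vm_class (st' ! q) = vm_class (st ! q)"
    using grow by auto
  have "range_load S eps (vrng (st ! p)) < theta S (vvnf (st ! p)) * (Lam rs (st ! p) + Lam rs (st ! q))"
    using sep pq cls len unfolding separated_def by auto
  also have "\<dots> \<le> theta S (vvnf (st ! p)) * (Lam rs (st' ! p) + Lam rs (st' ! q))"
    using grow theta pq_st by (intro mult_left_mono add_mono) auto
  finally show "range_load S eps (vrng (st' ! p))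
      < theta S (vvnf (st' ! p)) * (Lam rs (st' ! p) + Lam rs (st' ! q))"
    using cls(1) by (simp add: vm_class_def)
qed

lemma separated_append:
  assumes sep: "separated S eps rs st"
    and new: "\<forall>b\<in>set st. vm_class b = vm_class b' \<longrightarrow>
      range_load S eps (vrng b) < theta S (vvnf b) * (Lam rs b + Lam rs b')"
  shows "separated S eps rs (st @ [b'])"
  unfolding separated_def
proof (intro allI impI)
  fix p q assume pq: "p < q \<and> q < length (st @ [b']) \<and> vm_class ((st @ [b']) ! p) = vm_class ((st @ [b']) ! q)"
  show "range_load S eps (vrng ((st @ [b']) ! p))
      < theta S (vvnf ((st @ [b']) ! p)) * (Lam rs ((st @ [b']) ! p) + Lam rs ((st @ [b']) ! q))"
  proof (cases "q < length st")
    case True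
    then show ?thesis using sep pq unfolding separated_def by (auto simp: nth_append)
  next
    case False
    then have "q = length st" using pq by simp
    then show ?thesis using new pq by (auto simp: nth_append)
  qed
qed

lemma place_wf_vms:
  assumes pl: "place S eps rs k i v st st'" and wf: "\<forall>b\<in>set st. wf_vm S eps rs b"
    and k: "k < length rs" "v \<in> rvnfs (rs ! k)"
    and i: "i \<in> nodes S" "layer S i = lstar S (rs ! k)"
  shows "\<forall>b\<in>set st'. wf_vm S eps rs b"
  using pl
proof cases
  case (place_old j p)
  then have "wf_vm S eps rs (AVM i v j (vjobs (st ! p) @ [k]))"
    using wf k i nth_mem[of p st] by (auto simp: wf_vm_def viable_def)
  then show ?thesis using place_old(1) wf set_update_subset_insert by fastforce
next
  case (place_new j)
  then show ?thesis using wf k i by (auto simp: wf_vm_def)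
qed

lemma place_separated:
  assumes vs: "valid_sys S" and ep: "eps > 0" and us: "unlimited_seq S eps rs"
    and pl: "place S eps rs k i v st st'" and inv: "alg_inv S eps rs st" and k: "k < length rs"
  shows "separated S eps rs st'"
  using pl
proof cases
  case (place_old j p)
  let ?b = "AVM i v j (vjobs (st ! p) @ [k])"
  have "vm_class ?b = vm_class (st ! p)" using place_old(4) by (simp add: viable_def vm_class_def)
  moreover have "Lam rs (st ! p) \<le> Lam rs ?b"
    using load_pos[OF vs valid_req_nth[OF us k]] by (simp add: Lam_def)
  ultimately have grow: "\<forall>q<length st. vm_class (st' ! q) = vm_class (st ! q) \<and> Lam rs (st ! q) \<le> Lam rs (st' ! q)"
    unfolding place_old(1) using place_old(3) by (auto simp: nth_list_update)
  have "\<forall>b\<in>set st. 0 \<le> theta S (vvnf b)"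
    using inv wf_vm_theta_pos[OF vs us] by (auto simp: alg_inv_def less_imp_le)
  moreover have "separated S eps rs st" using inv by (simp add: alg_inv_def)
  moreover have "length st' = length st" using place_old(1) by simp
  ultimately show ?thesis using grow separated_mono by blast
next
  case (place_new j)
  have "range_load S eps (vrng b) < theta S (vvnf b) * (Lam rs b + Lam rs (AVM i v j [k]))"
    if b: "b \<in> set st" "vm_class b = vm_class (AVM i v j [k])" for b
  proof (rule ccontr)
    have cls: "vnode b = i" "vvnf b = v" "vrng b = j" using b(2) by (auto simp: vm_class_def)
    moreover have "\<forall>k'\<in>set (vjobs b). inL S eps j (Dv S (rs ! k') v)"
      using inv b(1) cls by (auto simp: alg_inv_def wf_vm_def)
    moreover assume "\<not> ?thesis"
    then have "theta S v * (Lam rs b + load (rs ! k)) \<le> range_load S eps j"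
      using cls by (simp add: Lam_def)
    ultimately have "viable S rs k v i j b" using place_new(2) by (intro viable_if_weighted_load_le[OF vs ep])
    moreover obtain q where "q < length st" "b = st ! q" using b(1) by (auto simp: in_set_conv_nth)
    ultimately show False using place_new(3) by blast
  qed
  moreover have "separated S eps rs st" using inv by (simp add: alg_inv_def)
  ultimately show ?thesis unfolding place_new(1) using separated_append by blast
qed

lemma place_list_alg_inv:
  assumes vs: "valid_sys S" and ep: "eps > 0" and us: "unlimited_seq S eps rs"
    and k: "k < length rs" and i: "i \<in> nodes S" "layer S i = lstar S (rs ! k)"
  shows "place_list S eps rs k i vs st st' \<Longrightarrow> set vs \<subseteq> rvnfs (rs ! k) \<Longrightarrow>
    alg_inv S eps rs st \<Longrightarrow> alg_inv S eps rs st'"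
proof (induction rule: place_list.induct)
  case 1
  then show ?case by simp
next
  case (2 v st st\<^sub>1 vs st\<^sub>2)
  then have "v \<in> rvnfs (rs ! k)" by simp
  with 2 have "alg_inv S eps rs st\<^sub>1"
    using place_wf_vms[OF _ _ k _ i] place_separated[OF vs ep us _ _ k]
    unfolding alg_inv_def by blast
  with 2 show ?case by simp
qed

lemma alg_run_alg_inv:
  assumes vs: "valid_sys S" and ep: "eps > 0" and us: "unlimited_seq S eps rs"
  shows "alg_run S eps rs n st \<Longrightarrow> alg_inv S eps rs st"
proof (induction rule: alg_run.induct)
  case 1
  then show ?case by (simp add: alg_inv_def separated_def)
next
  case (2 n st i vs st')
  then show ?case using place_list_alg_inv[OF vs ep us, of n i vs st st'] by simp
qed

section \<open>An upper bound on the cost of c-REShare\<close>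

text \<open>Twice the share of a VM at layer \<open>l*(r)\<close> with weighted load \<open>c\<^sub>j / 2\<close> and residual
  capability \<open>mubar - c\<^sub>j\<close>, plus the job's own processing cost.\<close>
definition alg_charge :: "('n, 'v, 'z) netsys_scheme \<Rightarrow> real \<Rightarrow> ('n, 'v) req \<Rightarrow> 'v \<Rightarrow> real" where
  "alg_charge S eps r v =
     2 * (theta S v * load r) / range_load S eps (range_index S eps (Dv S r v)) *
       (kf S (lstar S r) + kp S (lstar S r) *
          (mubar S - range_load S eps (range_index S eps (Dv S r v))))
     + kp S (lstar S r) * (theta S v * load r)"

lemma alg_charge_le_opt_charge:
  assumes vs: "valid_sys S" and ep: "eps > 0" and r: "valid_req S eps r" "v \<in> rvnfs r"
  shows "alg_charge S eps r v \<le> 2 * (1 + eps) * opt_charge S eps r v"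
proof -
  define c where "c = range_load S eps (range_index S eps (Dv S r v))"
  define L where "L = lstar S r"
  define w where "w = theta S v * load r"
  have "0 < c" unfolding c_def using inL_bounds(1)[OF vs ep inL_range_index[OF vs ep r]] .
  moreover have "c + c * eps \<noteq> 0" using \<open>0 < c\<close> ep by (smt (verit) mult_pos_pos)
  ultimately have "2 * (1 + eps) * opt_charge S eps r v = alg_charge S eps r v + kp S L * w"
    using ep unfolding opt_charge_def alg_charge_def c_def[symmetric] L_def[symmetric] w_def[symmetric]
    by (simp add: field_simps)
  moreover have "0 \<le> kp S L * w"
    unfolding L_def w_def using kf_kp_pos[OF vs lstar_in_layers[OF vs r(1)]]
      theta_pos[OF vs r] load_pos[OF vs r(1)] by simp
  ultimately show ?thesis by linarith
qed

definition light_vm :: "('n, 'v, 'z) netsys_scheme \<Rightarrow> real \<Rightarrow> ('n, 'v) req list \<Rightarrow> ('n, 'v) avm \<Rightarrow> bool" where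
  "light_vm S eps rs b \<longleftrightarrow> 2 * theta S (vvnf b) * Lam rs b \<le> range_load S eps (vrng b)"

definition max_vm_cost :: "('n, 'v, 'z) netsys_scheme \<Rightarrow> 'n \<Rightarrow> real" where
  "max_vm_cost S i = kf S (layer S i) + kp S (layer S i) * mubar S"

definition avm_cost :: "('n, 'v, 'z) netsys_scheme \<Rightarrow> ('n, 'v) req list \<Rightarrow> ('n, 'v) avm \<Rightarrow> real" where
  "avm_cost S rs b =
     (if vjobs b = [] then 0 else kf S (layer S (vnode b)) + kp S (layer S (vnode b)) * acap S rs b)"

lemma alg_cost_eq: "alg_cost S rs st = (\<Sum>b\<leftarrow>st. avm_cost S rs b)"
  by (simp add: alg_cost_def avm_cost_def)

lemma wf_vm_Lam_pos:
  assumes vs: "valid_sys S" and us: "unlimited_seq S eps rs" and wf: "wf_vm S eps rs b"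
  shows "0 < Lam rs b"
proof -
  obtain k where k: "k \<in> set (vjobs b)" using wf by (cases "vjobs b") (auto simp: wf_vm_def)
  have loads: "0 < load (rs ! k')" if "k' \<in> set (vjobs b)" for k'
    using that wf load_pos[OF vs valid_req_nth[OF us]] by (auto simp: wf_vm_def)
  then have "load (rs ! k) \<le> Lam rs b"
    unfolding Lam_def using k by (intro member_le_sum_list) (auto intro: less_imp_le)
  then show ?thesis using loads[OF k] by linarith
qed

lemma wf_vm_range_load:
  assumes vs: "valid_sys S" and ep: "eps > 0" and wf: "wf_vm S eps rs b"
  shows "0 < range_load S eps (vrng b)" "range_load S eps (vrng b) < mubar S"
proof -
  obtain k where "k \<in> set (vjobs b)" using wf by (cases "vjobs b") (auto simp: wf_vm_def)
  then have "inL S eps (vrng b) (Dv S (rs ! k) (vvnf b))" using wf by (auto simp: wf_vm_def)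
  note range = inL_bounds(1,3)[OF vs ep this]
  show "0 < range_load S eps (vrng b)" using range(1) .
  have "range_load S eps (vrng b) < range_load S eps (vrng b) * (1 + eps)" using range(1) ep by simp
  then show "range_load S eps (vrng b) < mubar S" using range(2) by linarith
qed

lemma sum_alg_charges_wf_vm:
  assumes vs: "valid_sys S" and ep: "eps > 0" and wf: "wf_vm S eps rs b"
  defines "l \<equiv> layer S (vnode b)" and "c \<equiv> range_load S eps (vrng b)"
  shows "(\<Sum>k\<leftarrow>vjobs b. alg_charge S eps (rs ! k) (vvnf b))
    = (2 * theta S (vvnf b) / c * (kf S l + kp S l * (mubar S - c)) + kp S l * theta S (vvnf b)) * Lam rs b"
proof -
  have "alg_charge S eps (rs ! k) (vvnf b)
      = (2 * theta S (vvnf b) / c * (kf S l + kp S l * (mubar S - c)) + kp S l * theta S (vvnf b)) * load (rs ! k)"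
    if "k \<in> set (vjobs b)" for k
  proof -
    have "inL S eps (vrng b) (Dv S (rs ! k) (vvnf b))" "lstar S (rs ! k) = l"
      using that wf by (auto simp: wf_vm_def l_def)
    then show ?thesis
      unfolding alg_charge_def c_def using range_index_eq[OF vs ep] by (simp add: algebra_simps)
  qed
  then show ?thesis
    unfolding Lam_def sum_list_const_mult[symmetric] by (metis (no_types, lifting) map_cong)
qed

lemma avm_cost_wf_vm_le:
  assumes vs: "valid_sys S" and ep: "eps > 0" and wf: "wf_vm S eps rs b"
  defines "l \<equiv> layer S (vnode b)" and "c \<equiv> range_load S eps (vrng b)"
  shows "avm_cost S rs b \<le> kf S l + kp S l * (mubar S - c) + kp S l * theta S (vvnf b) * Lam rs b"
proof -
  let ?D = "(\<lambda>k. Dv S (rs ! k) (vvnf b)) ` set (vjobs b)"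
  have ne: "vjobs b \<noteq> []" using wf by (simp add: wf_vm_def)
  then have "Min ?D \<in> ?D" by (intro Min_in) auto
  then obtain k where "k \<in> set (vjobs b)" "Min ?D = Dv S (rs ! k) (vvnf b)" by blast
  then have "1 / Min ?D \<le> mubar S - c"
    using wf inL_bounds(5)[OF vs ep] by (auto simp: wf_vm_def c_def)
  moreover have "0 < kp S l" unfolding l_def using wf kf_kp_pos[OF vs] by (simp add: wf_vm_def)
  ultimately have "kp S l * (1 / Min ?D) \<le> kp S l * (mubar S - c)" by (intro mult_left_mono) auto
  then show ?thesis using ne unfolding avm_cost_def acap_def l_def by (simp add: algebra_simps)
qed

text \<open>A light VM is paid for by the constant \<open>max_vm_cost\<close>; a heavy one has
  \<open>2 theta \<Lambda> / c\<^sub>j \<ge> 1\<close> and is paid for by the charges of its jobs.\<close>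
lemma avm_cost_le:
  assumes vs: "valid_sys S" and ep: "eps > 0" and us: "unlimited_seq S eps rs"
    and wf: "wf_vm S eps rs b"
  shows "avm_cost S rs b \<le> (if light_vm S eps rs b then max_vm_cost S (vnode b) else 0)
    + (\<Sum>k\<leftarrow>vjobs b. alg_charge S eps (rs ! k) (vvnf b))"
proof -
  define l where "l = layer S (vnode b)"
  define c where "c = range_load S eps (vrng b)"
  define th where "th = theta S (vvnf b)"
  define \<Lambda> where "\<Lambda> = Lam rs b"
  define E where "E = kf S l + kp S l * (mubar S - c)"
  have c: "0 < c" "c < mubar S" unfolding c_def using wf_vm_range_load[OF vs ep wf] by auto
  have kfp: "0 < kf S l" "0 < kp S l" unfolding l_def using wf kf_kp_pos[OF vs] by (auto simp: wf_vm_def)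
  have th_pos: "0 < th" unfolding th_def using wf_vm_theta_pos[OF vs us wf] .
  have \<Lambda>_pos: "0 < \<Lambda>" unfolding \<Lambda>_def using wf_vm_Lam_pos[OF vs us wf] .
  have E_pos: "0 < E" unfolding E_def using kfp c by (simp add: add_pos_pos)
  have charges: "(\<Sum>k\<leftarrow>vjobs b. alg_charge S eps (rs ! k) (vvnf b)) = (2 * th / c * E + kp S l * th) * \<Lambda>"
    using sum_alg_charges_wf_vm[OF vs ep wf] unfolding E_def l_def c_def th_def \<Lambda>_def .
  have cost: "avm_cost S rs b \<le> E + kp S l * th * \<Lambda>"
    using avm_cost_wf_vm_le[OF vs ep wf] unfolding E_def l_def c_def th_def \<Lambda>_def .
  show ?thesis
  proof (cases "light_vm S eps rs b")
    case True
    have "E \<le> max_vm_cost S (vnode b)"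
      unfolding E_def max_vm_cost_def l_def[symmetric] using kfp c by simp
    moreover have "0 \<le> 2 * th / c * E * \<Lambda>" using th_pos c E_pos \<Lambda>_pos by simp
    ultimately show ?thesis using True cost charges by (simp add: algebra_simps)
  next
    case False
    then have "1 \<le> 2 * th * \<Lambda> / c" using c by (simp add: light_vm_def th_def \<Lambda>_def c_def)
    then have "E \<le> 2 * th * \<Lambda> / c * E" using E_pos by (metis mult_1 mult_right_mono less_imp_le)
    then show ?thesis using False cost charges by (simp add: algebra_simps)
  qed
qed

definition vm_classes :: "('n, 'v, 'z) netsys_scheme \<Rightarrow> real \<Rightarrow> ('n \<times> 'v \<times> nat) set" where
  "vm_classes S eps = nodes S \<times> VNFs S \<times> {j. lmin S * (1 + eps) ^ (j + 1) < mubar S}"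

lemma finite_vm_classes:
  assumes "valid_sys S" "eps > 0"
  shows "finite (vm_classes S eps)"
proof -
  have "{j. lmin S * (1 + eps) ^ (j + 1) < mubar S} = {j. (lmin S * (1 + eps)) * (1 + eps) ^ j < mubar S}"
    by (simp add: mult_ac)
  moreover have "finite {j. (lmin S * (1 + eps)) * (1 + eps) ^ j < mubar S}"
    using assms by (intro finite_geometric_below) (auto simp: valid_sys_def)
  ultimately show ?thesis using assms(1) by (simp add: vm_classes_def valid_sys_def)
qed

lemma wf_vm_class_mem:
  assumes us: "unlimited_seq S eps rs" and wf: "wf_vm S eps rs b"
  shows "vm_class b \<in> vm_classes S eps"
proof -
  obtain k where "k \<in> set (vjobs b)" using wf by (cases "vjobs b") (auto simp: wf_vm_def)
  then have "k < length rs" "vvnf b \<in> rvnfs (rs ! k)" "inL S eps (vrng b) (Dv S (rs ! k) (vvnf b))"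
    using wf by (auto simp: wf_vm_def)
  moreover have "vnode b \<in> nodes S" using wf by (simp add: wf_vm_def)
  ultimately show ?thesis
    using valid_req_nth[OF us] by (auto simp: vm_class_def vm_classes_def inL_def valid_req_def)
qed

lemma light_vm_class_inj:
  assumes sep: "separated S eps rs st"
  shows "inj_on (\<lambda>p. vm_class (st ! p)) {p\<in>{..<length st}. light_vm S eps rs (st ! p)}"
proof -
  have False if "p < q" "q < length st" "light_vm S eps rs (st ! p)" "light_vm S eps rs (st ! q)"
    "vm_class (st ! p) = vm_class (st ! q)" for p q
  proof -
    have "range_load S eps (vrng (st ! p))
        < theta S (vvnf (st ! p)) * (Lam rs (st ! p) + Lam rs (st ! q))"
      using sep that unfolding separated_def by blast
    then show False using that(3-5) by (simp add: light_vm_def vm_class_def algebra_simps)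
  qed
  then show ?thesis by (intro inj_onI) (metis linorder_neqE_nat mem_Collect_eq lessThan_iff)
qed

definition light_overhead :: "('n, 'v, 'z) netsys_scheme \<Rightarrow> real \<Rightarrow> real" where
  "light_overhead S eps = (\<Sum>z\<in>vm_classes S eps. max_vm_cost S (fst z))"

lemma light_vm_costs_le_overhead:
  fixes S :: "('n, 'v, 'z) netsys_scheme" and st :: "('n, 'v) avm list"
  assumes vs: "valid_sys S" and ep: "eps > 0" and us: "unlimited_seq S eps rs"
    and inv: "alg_inv S eps rs st"
  shows "(\<Sum>b\<leftarrow>st. if light_vm S eps rs b then max_vm_cost S (vnode b) else 0) \<le> light_overhead S eps"
proof -
  let ?P = "{p\<in>{..<length st}. light_vm S eps rs (st ! p)}"
  let ?g = "\<lambda>p. vm_class (st ! p)"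
  let ?F = "\<lambda>z :: 'n \<times> 'v \<times> nat. max_vm_cost S (fst z)"
  have "(\<Sum>b\<leftarrow>st. if light_vm S eps rs b then max_vm_cost S (vnode b) else 0)
      = (\<Sum>p<length st. if light_vm S eps rs (st ! p) then ?F (?g p) else 0)"
    by (simp add: sum_list_sum_nth atLeast0LessThan vm_class_def cong: if_cong)
  also have "\<dots> = (\<Sum>p\<in>?P. ?F (?g p))" by (rule sum.inter_filter[symmetric]) simp
  also have "\<dots> = (\<Sum>z\<in>?g ` ?P. ?F z)"
  proof -
    have "inj_on ?g ?P" using light_vm_class_inj[of S eps rs st] inv unfolding alg_inv_def by blast
    then show ?thesis by (simp only: sum.reindex comp_def)
  qed
  also have "\<dots> \<le> (\<Sum>z\<in>vm_classes S eps. ?F z)"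
  proof (rule sum_mono2[OF finite_vm_classes[OF vs ep]])
    show "?g ` ?P \<subseteq> vm_classes S eps"
      using inv wf_vm_class_mem[OF us] by (auto simp: alg_inv_def)
    show "0 \<le> ?F z" if "z \<in> vm_classes S eps - ?g ` ?P" for z
      using that vs by (auto simp: vm_classes_def max_vm_cost_def valid_sys_def intro: add_nonneg_nonneg less_imp_le)
  qed
  finally show ?thesis unfolding light_overhead_def .
qed

lemma sum_jobs:
  assumes "valid_sys S" "unlimited_seq S eps rs"
  shows "(\<Sum>y\<in>jobs rs. f (fst y) (snd y)) = (\<Sum>k<length rs. \<Sum>v\<in>rvnfs (rs ! k). f k v)"
  unfolding jobs_def using assms
  by (subst sum.Sigma) (auto simp: case_prod_unfold intro: finite_rvnfs valid_req_nth)

lemma alg_cost_le_charges: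
  assumes vs: "valid_sys S" and ep: "eps > 0" and us: "unlimited_seq S eps rs"
    and run: "alg_run S eps rs (length rs) st"
  shows "alg_cost S rs st \<le> (\<Sum>y\<in>jobs rs. alg_charge S eps (rs ! fst y) (snd y)) + light_overhead S eps"
proof -
  have inv: "alg_inv S eps rs st" using alg_run_alg_inv[OF vs ep us run] .
  have "alg_cost S rs st \<le> (\<Sum>b\<leftarrow>st. (if light_vm S eps rs b then max_vm_cost S (vnode b) else 0)
      + (\<Sum>k\<leftarrow>vjobs b. alg_charge S eps (rs ! k) (vvnf b)))"
    unfolding alg_cost_eq using inv avm_cost_le[OF vs ep us] by (intro sum_list_mono) (auto simp: alg_inv_def)
  also have "\<dots> = (\<Sum>b\<leftarrow>st. if light_vm S eps rs b then max_vm_cost S (vnode b) else 0)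
      + vm_job_sum (\<lambda>k v. alg_charge S eps (rs ! k) v) st"
    by (simp add: vm_job_sum_def sum_list_addf)
  also have "vm_job_sum (\<lambda>k v. alg_charge S eps (rs ! k) v) st
      = (\<Sum>y\<in>jobs rs. alg_charge S eps (rs ! fst y) (snd y))"
    using alg_run_vm_job_sum[OF run] sum_jobs[OF vs us, of "\<lambda>k v. alg_charge S eps (rs ! k) v"]
    by simp
  also have "(\<Sum>b\<leftarrow>st. if light_vm S eps rs b then max_vm_cost S (vnode b) else 0) \<le> light_overhead S eps"
    using light_vm_costs_le_overhead[OF vs ep us inv] .
  finally show ?thesis by simp
qed

lemma alg_cost_le_opt_cost:
  assumes vs: "valid_sys S" and ep: "eps > 0" and us: "unlimited_seq S eps rs"
    and run: "alg_run S eps rs (length rs) st"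
    and ne: "{dep_cost S rs vms asg | vms asg. feasible_dep S rs vms asg} \<noteq> {}"
  shows "alg_cost S rs st \<le> 2 * (1 + eps) * opt_cost S rs + light_overhead S eps"
proof -
  have "(\<Sum>y\<in>jobs rs. alg_charge S eps (rs ! fst y) (snd y))
      \<le> (\<Sum>y\<in>jobs rs. 2 * (1 + eps) * opt_charge S eps (rs ! fst y) (snd y))"
    by (intro sum_mono alg_charge_le_opt_charge[OF vs ep]) (auto simp: jobs_def intro: valid_req_nth[OF us])
  also have "\<dots> = 2 * (1 + eps) * (\<Sum>y\<in>jobs rs. opt_charge S eps (rs ! fst y) (snd y))"
    by (simp add: sum_distrib_left)
  also have "\<dots> \<le> 2 * (1 + eps) * opt_cost S rs"
    using opt_cost_ge_opt_charges[OF vs ep us ne] ep by (intro mult_left_mono) auto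
  finally show ?thesis using alg_cost_le_charges[OF vs ep us run] by linarith
qed

lemma asymp_competitive_if_additive_bound:
  fixes OPT :: "'s \<Rightarrow> real"
  assumes "\<And>\<sigma> a. cls \<sigma> \<Longrightarrow> A \<sigma> a \<Longrightarrow> z < OPT \<sigma> \<Longrightarrow> a \<le> c * OPT \<sigma> + K"
  shows "asymp_competitive c cls A OPT"
  unfolding asymp_competitive_def
proof (intro allI impI)
  fix \<delta> :: real assume "0 < \<delta>"
  have "a \<le> (c + \<delta>) * OPT \<sigma>" if "cls \<sigma>" "A \<sigma> a" "max (K / \<delta>) (z + 1) \<le> OPT \<sigma>" for \<sigma> a
  proof -
    have "K \<le> \<delta> * OPT \<sigma>" using that(3) \<open>0 < \<delta>\<close> by (simp add: pos_divide_le_eq mult.commute)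
    moreover have "a \<le> c * OPT \<sigma> + K" using assms that by simp
    ultimately show ?thesis by (simp add: algebra_simps)
  qed
  then show "\<exists>X. \<forall>\<sigma> a. cls \<sigma> \<longrightarrow> A \<sigma> a \<longrightarrow> X \<le> OPT \<sigma> \<longrightarrow> a \<le> (c + \<delta>) * OPT \<sigma>"
    by blast
qed

theorem theorem1:
  fixes S :: "('n, 'v) netsys" and eps :: real
  assumes "valid_sys S" and "eps > 0"
  shows "asymp_competitive (2 * (1 + eps)) (unlimited_seq S eps)
           (\<lambda>rs a. \<exists>st. alg_run S eps rs (length rs) st \<and> a = alg_cost S rs st)
           (opt_cost S)"
proof (rule asymp_competitive_if_additive_bound[where z = "Inf {}" and K = "light_overhead S eps"])
  \<comment> \<open>without a feasible deployment \<open>opt_cost\<close> is the junk value \<open>Inf {}\<close>; the threshold excludes it\<close>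
  fix rs a
  assume us: "unlimited_seq S eps rs"
    and run: "\<exists>st. alg_run S eps rs (length rs) st \<and> a = alg_cost S rs st"
    and opt: "Inf {} < opt_cost S rs"
  have "{dep_cost S rs vms asg | vms asg. feasible_dep S rs vms asg} \<noteq> {}"
    using opt unfolding opt_cost_def by (metis less_irrefl)
  then show "a \<le> 2 * (1 + eps) * opt_cost S rs + light_overhead S eps"
    using run alg_cost_le_opt_cost[OF assms us] by blast
qed

end
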